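(* Let $\delta\in(0,1)$ and suppose $$N \ge \frac{2}{(r/2)^d(\tfrac12-\eta)^2}\ln\left(\frac{1}{(r/2)^d(\tfrac12-\eta)^2\,\delta}\right)+1.$$ Then with probability at least $1-\delta$, after one synchronous best-response update, every sensor $i$ with $|w\cdot x_i|\ge r$ (i.e. at distance at least $r$ from the target separator) is in state $t(x_i)$.
   Context: Sensors $1,\dots,N$ have positions $x_1,\dots,x_N$ drawn i.i.d. uniformly from the unit ball $\{x\in\mathbb{R}^d:\|x\|\le 1\}$, $d\ge1$. The target separator is the hyperplane $\{x: w\cdot x=0\}$ for a fixed unit vector $w$, and the target label of $x$ is $t(x)=\mathrm{sign}(w\cdot x)$. Noise rate $\eta\in[0,1/2)$: conditional on the positions, the initial states in $\{+1,-1\}$ are independent across sensors, and sensor $i$'s initial state equals $t(x_i)$ with probability at least $1-\eta$. Communication radius $r\in(0,1]$: distinct sensors $i\ne j$ are neighbors if $\|x_i-x_j\|\le r$. A best-response update of sensor $i$ sets its state to the majority state among its neighbors' current states; in case of a tie (or no neighbors) the new state may be arbitrary. In a synchronous update, all sensors simultaneously perform a best-response update based on the initial states. *)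

theory Defs
  imports "HOL-Probability.Probability"
begin

text \<open>Sensors are indexed by 0..<N; a configuration of positions is X :: nat => 'a,
  a state vector is s :: nat => real with values in {1,-1}.\<close>

definition target_label :: "'a::euclidean_space \<Rightarrow> 'a \<Rightarrow> real" where
  "target_label w x = sgn (w \<bullet> x)"

definition neighbors :: "nat \<Rightarrow> real \<Rightarrow> (nat \<Rightarrow> 'a::euclidean_space) \<Rightarrow> nat \<Rightarrow> nat set" where
  "neighbors N r X i = {j. j < N \<and> j \<noteq> i \<and> norm (X i - X j) \<le> r}"

text \<open>v is a best-response (majority) state for sensor i given current states s;
  in case of a tie (or no neighbours) v is arbitrary in {1,-1}.\<close>
definition best_response ::
  "nat \<Rightarrow> real \<Rightarrow> (nat \<Rightarrow> 'a::euclidean_space) \<Rightarrow> (nat \<Rightarrow> real) \<Rightarrow> nat \<Rightarrow> real \<Rightarrow> bool" where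
  "best_response N r X s i v \<longleftrightarrow>
     v \<in> {1, -1} \<and>
     (card {j \<in> neighbors N r X i. s j = 1} > card {j \<in> neighbors N r X i. s j = -1} \<longrightarrow> v = 1) \<and>
     (card {j \<in> neighbors N r X i. s j = -1} > card {j \<in> neighbors N r X i. s j = 1} \<longrightarrow> v = -1)"

definition sync_update ::
  "nat \<Rightarrow> real \<Rightarrow> (nat \<Rightarrow> 'a::euclidean_space) \<Rightarrow> (nat \<Rightarrow> real) \<Rightarrow> (nat \<Rightarrow> real) \<Rightarrow> bool" where
  "sync_update N r X s s' \<longleftrightarrow> (\<forall>i<N. best_response N r X s i (s' i))"

definition pos_space :: "nat \<Rightarrow> (nat \<Rightarrow> 'a::euclidean_space) measure" where
  "pos_space N = PiM {..<N} (\<lambda>_. uniform_measure lborel (cball 0 1))"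

definition state_space :: "nat \<Rightarrow> (nat \<Rightarrow> real) measure" where
  "state_space N = PiM {..<N} (\<lambda>_. count_space UNIV)"

definition noise_kernel :: "nat \<Rightarrow> ((nat \<Rightarrow> 'a) \<Rightarrow> nat \<Rightarrow> real pmf) \<Rightarrow> (nat \<Rightarrow> 'a) \<Rightarrow> (nat \<Rightarrow> real) measure" where
  "noise_kernel N q X = PiM {..<N} (\<lambda>i. measure_pmf (q X i))"

definition joint_model :: "nat \<Rightarrow> ((nat \<Rightarrow> 'a::euclidean_space) \<Rightarrow> nat \<Rightarrow> real pmf) \<Rightarrow> ((nat \<Rightarrow> 'a) \<times> (nat \<Rightarrow> real)) measure" where
  "joint_model N q = pos_space N \<bind> (\<lambda>X. noise_kernel N q X \<bind>
       (\<lambda>s. return (pos_space N \<Otimes>\<^sub>M state_space N) (X, s)))"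

end

theory Submission
  imports Defs
begin

text \<open>
  Call a sensor i far if |w\<bullet>x_i| \<ge> r.  An update can leave a far sensor in a
  wrong state only if its target label has no strict majority among its neighbours' initial
  states ("failure at i"); so it suffices to bound the probability of failure at each i and
  take a union bound over the N sensors.

  Failure at a far sensor i is bounded by a Chernoff argument: weight a neighbour's vote by
  1/z if it agrees with the target label of i and by z = 2(1-\<eta>) otherwise.  On failure the
  product of the weights is \<ge> 1, so by Markov and independence of the noise the conditional
  failure probability is at most the product of the mean weights.  A neighbour off the
  separator lies on the same side as i, so its mean weight is \<le> 1 - 2(1/2-\<eta>)^2.
  Averaging over the positions, each other sensor is such a neighbour with probability
  \<ge> (r/2)^d, giving the bound (1-2a)^(N-1) with a = (r/2)^d (1/2-\<eta>)^2, and
  N (1-2a)^(N-1) \<le> \<delta> by the assumption on N.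
\<close>

lemma prob_space_unit_ball:
  "prob_space (uniform_measure lborel (cball (0::'a::euclidean_space) 1))"
proof (rule prob_space_uniform_measure)
  show "emeasure lborel (cball (0::'a) 1) \<noteq> 0"
    using unit_ball_vol_pos[of "real DIM('a)"] by (simp add: emeasure_cball del: unit_ball_vol_pos)
qed (metis emeasure_lborel_cball_finite less_irrefl infinity_ennreal_def)

lemma prob_space_pos_space: "prob_space (pos_space N :: (nat \<Rightarrow> 'a::euclidean_space) measure)"
  unfolding pos_space_def by (intro prob_space_PiM prob_space_unit_ball)

lemma prob_space_noise_kernel: "prob_space (noise_kernel N q X)"
  unfolding noise_kernel_def by (intro prob_space_PiM prob_space_measure_pmf)

lemma sets_noise_kernel: "sets (noise_kernel N q X) = sets (state_space N)"
  unfolding noise_kernel_def state_space_def by (intro sets_PiM_cong) auto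

lemma space_noise_kernel: "space (noise_kernel N q X) = space (state_space N)"
  using sets_noise_kernel by (rule sets_eq_imp_space_eq)

lemma measurable_joint_kernel:
  assumes "noise_kernel N q \<in> measurable (pos_space N) (subprob_algebra (state_space N))"
  shows "(\<lambda>X. noise_kernel N q X \<bind> (\<lambda>s. return (pos_space N \<Otimes>\<^sub>M state_space N) (X, s)))
           \<in> measurable (pos_space N) (subprob_algebra (pos_space N \<Otimes>\<^sub>M state_space N))"
  by (rule measurable_bind[OF assms]) measurable

lemma measurable_pair_with:
  assumes "X \<in> space (pos_space N)"
  shows "(\<lambda>s. (X, s)) \<in> measurable (noise_kernel N q X) (pos_space N \<Otimes>\<^sub>M state_space N)"
  using measurable_Pair1'[OF assms] by (simp cong: measurable_cong_sets add: sets_noise_kernel)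

lemma joint_model_sets_prob:
  fixes q :: "(nat \<Rightarrow> 'a::euclidean_space) \<Rightarrow> nat \<Rightarrow> real pmf"
  assumes q_meas: "noise_kernel N q \<in> measurable (pos_space N) (subprob_algebra (state_space N))"
  shows "sets (joint_model N q) = sets (pos_space N \<Otimes>\<^sub>M state_space N)"
    and "prob_space (joint_model N q)"
proof -
  let ?P = "pos_space N \<Otimes>\<^sub>M state_space N"
  have ne: "space (pos_space N :: (nat \<Rightarrow> 'a) measure) \<noteq> {}"
    using prob_space.not_empty[OF prob_space_pos_space] by blast
  have ne_kernel: "space (noise_kernel N q X) \<noteq> {}" for X
    using prob_space.not_empty[OF prob_space_noise_kernel] by blast
  show "sets (joint_model N q) = sets ?P"
    unfolding joint_model_def by (rule sets_bind[OF sets_bind[OF _ ne_kernel] ne]) simp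
  have "prob_space (noise_kernel N q X \<bind> (\<lambda>s. return ?P (X, s)))"
    if X: "X \<in> space (pos_space N)" for X
  proof (rule prob_space.prob_space_bind[OF prob_space_noise_kernel])
    show "(\<lambda>s. return ?P (X, s)) \<in> measurable (noise_kernel N q X) (subprob_algebra ?P)"
      using measurable_pair_with[OF X] by measurable
    show "AE s in noise_kernel N q X. prob_space (return ?P (X, s))"
      using X by (intro AE_I2 prob_space_return) (simp add: space_pair_measure space_noise_kernel)
  qed
  then show "prob_space (joint_model N q)"
    unfolding joint_model_def
    by (intro prob_space.prob_space_bind[OF prob_space_pos_space _ measurable_joint_kernel[OF q_meas]]
        AE_I2)
qed

lemma joint_model_emeasure:
  fixes q :: "(nat \<Rightarrow> 'a::euclidean_space) \<Rightarrow> nat \<Rightarrow> real pmf"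
  assumes q_meas: "noise_kernel N q \<in> measurable (pos_space N) (subprob_algebra (state_space N))"
    and A: "A \<in> sets (pos_space N \<Otimes>\<^sub>M state_space N)"
  shows "emeasure (joint_model N q) A =
    (\<integral>\<^sup>+X. emeasure (noise_kernel N q X) {s \<in> space (state_space N). (X, s) \<in> A} \<partial>pos_space N)"
proof -
  let ?P = "pos_space N \<Otimes>\<^sub>M state_space N"
  have ne: "space (pos_space N :: (nat \<Rightarrow> 'a) measure) \<noteq> {}"
    using prob_space.not_empty[OF prob_space_pos_space] by blast
  have "emeasure (joint_model N q) A =
          (\<integral>\<^sup>+X. emeasure (noise_kernel N q X \<bind> (\<lambda>s. return ?P (X, s))) A \<partial>pos_space N)"
    unfolding joint_model_def by (rule emeasure_bind[OF ne measurable_joint_kernel[OF q_meas] A])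
  also have "\<dots> = (\<integral>\<^sup>+X. emeasure (noise_kernel N q X) {s \<in> space (state_space N). (X, s) \<in> A} \<partial>pos_space N)"
  proof (rule nn_integral_cong)
    fix X :: "nat \<Rightarrow> 'a" assume X: "X \<in> space (pos_space N)"
    have ne_kernel: "space (noise_kernel N q X) \<noteq> {}"
      using prob_space.not_empty[OF prob_space_noise_kernel] by blast
    note m = measurable_pair_with[OF X]
    show "emeasure (noise_kernel N q X \<bind> (\<lambda>s. return ?P (X, s))) A
            = emeasure (noise_kernel N q X) {s \<in> space (state_space N). (X, s) \<in> A}"
      by (simp add: bind_return_distr'[OF ne_kernel m] emeasure_distr[OF m A] space_noise_kernel
            vimage_def Int_def conj_commute)
  qed
  finally show ?thesis .
qed

lemma half_ball_inside:
  fixes y :: "'a::real_normed_vector"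
  assumes y: "norm y \<le> 1" and r: "0 < r" "r \<le> 2"
  shows "cball ((1 - r/2) *\<^sub>R y) (r/2) \<subseteq> cball 0 1 \<inter> cball y r"
proof
  fix x assume x: "x \<in> cball ((1 - r/2) *\<^sub>R y) (r/2)"
  let ?c = "(1 - r/2) *\<^sub>R y"
  have "norm x \<le> norm ?c + r/2"
    using x norm_triangle_ineq2[of x ?c] by (auto simp: dist_norm norm_minus_commute)
  also have "norm ?c = (1 - r/2) * norm y"
    using r by simp
  also have "\<dots> \<le> 1 - r/2"
    using r y mult_left_mono[of "norm y" 1 "1 - r/2"] by simp
  finally have "norm x \<le> 1" by simp
  moreover have "dist y x \<le> dist y ?c + dist ?c x"
    by (rule dist_triangle)
  moreover have "y - ?c = (r/2) *\<^sub>R y"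
    by (simp add: algebra_simps)
  then have "dist y ?c = r/2 * norm y"
    using r by (simp add: dist_norm)
  moreover have "r/2 * norm y \<le> r/2"
    using r y mult_left_mono[of "norm y" 1 "r/2"] by simp
  ultimately show "x \<in> cball 0 1 \<inter> cball y r"
    using x by (simp add: dist_commute)
qed

lemma uniform_ball_prob_ge:
  fixes y :: "'a::euclidean_space"
  assumes y: "norm y \<le> 1" and r: "0 < r" "r \<le> 2"
  shows "measure (uniform_measure lborel (cball (0::'a) 1)) (cball y r) \<ge> (r/2) ^ DIM('a)"
proof -
  let ?V = "unit_ball_vol (real DIM('a))"
  have V: "0 < ?V" by (rule unit_ball_vol_pos) simp
  have "?V * (r/2) ^ DIM('a) = measure lborel (cball ((1 - r/2) *\<^sub>R y) (r/2))"
    using r by (simp add: content_cball)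
  also have "\<dots> \<le> measure lborel (cball 0 1 \<inter> cball y r)"
  proof (rule measure_mono_fmeasurable[OF half_ball_inside[OF y r]])
    show "cball 0 1 \<inter> cball y r \<in> fmeasurable lborel"
      by (rule fmeasurableI2[of "cball 0 1"]) (auto simp: fmeasurable_def emeasure_lborel_cball_finite[unfolded infinity_ennreal_def])
  qed simp
  also have "\<dots> = ?V * measure (uniform_measure lborel (cball (0::'a) 1)) (cball y r)"
    using V by (subst measure_uniform_measure)
       (auto simp: emeasure_cball content_cball emeasure_lborel_cball_finite simp del: unit_ball_vol_pos)
  finally show ?thesis
    using V by simp
qed

lemma sgn_inner_near:
  fixes w x y :: "'a::real_inner"
  assumes w: "norm w = 1" and far: "r \<le> \<bar>w \<bullet> x\<bar>" and near: "norm (x - y) \<le> r"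
    and off: "w \<bullet> y \<noteq> 0"
  shows "sgn (w \<bullet> y) = sgn (w \<bullet> x)"
proof -
  have "\<bar>w \<bullet> x - w \<bullet> y\<bar> \<le> norm w * norm (x - y)"
    using Cauchy_Schwarz_ineq2[of w "x - y"] by (simp add: inner_diff_right)
  then have "\<bar>w \<bullet> x - w \<bullet> y\<bar> \<le> r"
    using w near by simp
  then show ?thesis
    using far off by (auto simp: sgn_real_def split: if_splits)
qed

text \<open>Hyperplanes are Lebesgue-null, so almost surely a uniform point of the unit ball does not
  lie on the target separator.\<close>

lemma AE_uniform_off_hyperplane:
  fixes w :: "'a::euclidean_space"
  assumes "w \<noteq> 0"
  shows "AE x in uniform_measure lborel (cball (0::'a) 1). w \<bullet> x \<noteq> 0"
proof (rule AE_uniform_measureI)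
  have "{x. w \<bullet> x = 0} \<in> null_sets lborel"
    using negligible_hyperplane[of w 0] assms
    by (auto simp: null_sets_completion_iff negligible_iff_null_sets)
  from AE_not_in[OF this] show "AE x in lborel. x \<in> cball 0 1 \<longrightarrow> w \<bullet> x \<noteq> 0"
    by eventually_elim simp
qed simp

text \<open>Exponential tilt used for the Chernoff bound on a majority vote: a vote for the value T
  has weight 1/z, any other vote weight z.  For z \<ge> 1 the product of the weights over a
  neighbourhood is \<ge> 1 unless T has a strict majority there.\<close>

definition tilt :: "real \<Rightarrow> real \<Rightarrow> real \<Rightarrow> real" where
  "tilt z T v = (if v = T then 1/z else z)"

lemma tilt_expectation:
  fixes p :: "real pmf"
  assumes z: "0 < z"
  shows "(\<integral>\<^sup>+v. ennreal (tilt z T v) \<partial>measure_pmf p) = ennreal (z + (1/z - z) * pmf p T)"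
proof -
  have ind: "integrable (measure_pmf p) (indicator {T} :: real \<Rightarrow> real)"
    by (rule integrable_real_indicator) (auto simp: measure_pmf.emeasure_finite[unfolded infinity_ennreal_def] less_top[symmetric])
  have tilt: "tilt z T = (\<lambda>v. z + (1/z - z) * indicator {T} v)"
    by (auto simp: tilt_def indicator_def)
  have "(\<integral>\<^sup>+v. ennreal (tilt z T v) \<partial>measure_pmf p) = ennreal (\<integral>v. tilt z T v \<partial>measure_pmf p)"
  proof (rule nn_integral_eq_integral)
    show "integrable (measure_pmf p) (tilt z T)"
      unfolding tilt using ind by simp
  qed (use z in \<open>simp add: tilt_def\<close>)
  also have "(\<integral>v. tilt z T v \<partial>measure_pmf p) = z + (1/z - z) * pmf p T"
    using ind by (simp add: tilt measure_pmf.prob_space measure_pmf_single)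
  finally show ?thesis .
qed

lemma inverse_le_self:
  fixes z :: real
  assumes "1 \<le> z"
  shows "1/z \<le> z"
  using assms by (simp add: divide_le_eq) (metis mult_mono order.trans mult_1 zero_le_one)

lemma tilt_expectation_le:
  fixes p :: "real pmf"
  assumes z: "1 \<le> z"
  shows "(\<integral>\<^sup>+v. ennreal (tilt z T v) \<partial>measure_pmf p) \<le> ennreal z"
proof -
  have "(1/z - z) * pmf p T \<le> 0"
    using inverse_le_self[OF z] by (simp add: mult_nonpos_nonneg)
  then show ?thesis
    using z by (simp add: tilt_expectation ennreal_leI)
qed

lemma tilt_expectation_noisy:
  fixes p :: "real pmf"
  assumes eta: "0 \<le> \<eta>" "\<eta> < 1/2" and pT: "1 - \<eta> \<le> pmf p T"
  shows "(\<integral>\<^sup>+v. ennreal (tilt (2*(1-\<eta>)) T v) \<partial>measure_pmf p) \<le> ennreal (1 - 2*(1/2 - \<eta>)^2)"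
proof -
  define z where "z = 2*(1-\<eta>)"
  have z: "1 \<le> z" using eta by (simp add: z_def)
  have "z + (1/z - z) * pmf p T \<le> z + (1/z - z) * (1 - \<eta>)"
    using pT inverse_le_self[OF z] by (intro add_left_mono mult_left_mono_neg) auto
  also have "\<dots> = 1 - 2*(1/2 - \<eta>)^2"
    using eta by (simp add: z_def field_simps power2_eq_square)
  finally show ?thesis
    unfolding z_def[symmetric] using z by (subst tilt_expectation) (auto intro: ennreal_leI)
qed

lemma tilt_prod_ge_1:
  fixes S :: "'i set" and s :: "'i \<Rightarrow> real"
  assumes S: "finite S" and z: "1 \<le> z" and T: "T \<noteq> -T"
    and no_majority: "card {j\<in>S. s j = T} \<le> card {j\<in>S. s j = -T}"
  shows "1 \<le> (\<Prod>j\<in>S. tilt z T (s j))"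
proof -
  define a where "a = card {j\<in>S. s j = T}"
  define b where "b = card {j\<in>S. s j \<noteq> T}"
  have "card {j\<in>S. s j = -T} \<le> b"
    unfolding b_def using S T by (intro card_mono) auto
  then have ab: "a \<le> b"
    using no_majority unfolding a_def by linarith
  have "(\<Prod>j\<in>S. tilt z T (s j)) = (1/z) ^ a * z ^ b"
    unfolding a_def b_def tilt_def
    by (simp add: prod.If_cases[OF S] Int_def conj_commute set_diff_eq)
  also have "\<dots> = z ^ (b - a)"
    using ab z by (simp add: power_diff power_one_over)
  finally show ?thesis
    using z by simp
qed

text \<open>Chernoff bound for a majority vote: if the votes s j (j \<in> I) are independent with laws
  p j, the probability that T does not win a strict majority among the voters S is at most
  the product over S of the tilt means.  (Markov's inequality for the product of tilts.)\<close>

lemma majority_failure_bound: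
  fixes p :: "'i \<Rightarrow> real pmf"
  assumes I: "finite I" and S: "S \<subseteq> I" and z: "1 \<le> z" and T: "T \<noteq> -T"
  shows "emeasure (Pi\<^sub>M I (\<lambda>j. measure_pmf (p j)))
           {s \<in> space (Pi\<^sub>M I (\<lambda>j. measure_pmf (p j))). card {j\<in>S. s j = T} \<le> card {j\<in>S. s j = -T}}
         \<le> (\<Prod>j\<in>S. \<integral>\<^sup>+v. ennreal (tilt z T v) \<partial>measure_pmf (p j))"
proof -
  let ?M = "Pi\<^sub>M I (\<lambda>j. measure_pmf (p j))"
  let ?A = "{s \<in> space ?M. card {j\<in>S. s j = T} \<le> card {j\<in>S. s j = -T}}"
  define \<phi> where "\<phi> j v = (if j \<in> S then tilt z T v else 1)" for j v
  interpret product_sigma_finite "\<lambda>j. measure_pmf (p j)"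
    by unfold_locales
  have finS: "finite S"
    using I S by (rule finite_subset[rotated])
  have \<phi>_nonneg: "0 \<le> \<phi> j v" for j v
    using z by (simp add: \<phi>_def tilt_def)
  have "emeasure ?M ?A \<le> (\<integral>\<^sup>+s. indicator ?A s \<partial>?M)"
    by (cases "?A \<in> sets ?M") (simp_all add: emeasure_notin_sets)
  also have "\<dots> \<le> (\<integral>\<^sup>+s. (\<Prod>j\<in>I. ennreal (\<phi> j (s j))) \<partial>?M)"
  proof (rule nn_integral_mono)
    fix s
    have "(\<Prod>j\<in>I. ennreal (\<phi> j (s j))) = ennreal (\<Prod>j\<in>I \<inter> S. tilt z T (s j))"
      using \<phi>_nonneg I by (simp add: prod_ennreal prod.inter_restrict \<phi>_def)
    moreover have "I \<inter> S = S"
      using S by blast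
    ultimately show "indicator ?A s \<le> (\<Prod>j\<in>I. ennreal (\<phi> j (s j)))"
      using tilt_prod_ge_1[OF finS z T, of s] by (auto simp: indicator_def)
  qed
  also have "\<dots> = (\<Prod>j\<in>I. \<integral>\<^sup>+v. ennreal (\<phi> j v) \<partial>measure_pmf (p j))"
    using I by (intro product_nn_integral_prod) auto
  also have "\<dots> = (\<Prod>j\<in>S. \<integral>\<^sup>+v. ennreal (tilt z T v) \<partial>measure_pmf (p j))"
    using I S by (intro prod.mono_neutral_cong_right)
      (auto simp: \<phi>_def measure_pmf.emeasure_space_1)
  finally show ?thesis .
qed

text \<open>After averaging out its noisy vote, sensor j contributes to the Chernoff bound for a sensor
  at position y a factor depending only on its own position x: 1 if it is not a neighbour,
  1 - 2(1/2 - \<eta>)^2 if it is a neighbour off the separator (hence on the same side as y),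
  and the crude 2(1 - \<eta>) on the (null) separator itself.\<close>

definition neighbour_factor :: "'a::euclidean_space \<Rightarrow> real \<Rightarrow> real \<Rightarrow> 'a \<Rightarrow> 'a \<Rightarrow> real" where
  "neighbour_factor w r \<eta> y x =
     (if norm (y - x) \<le> r then (if w \<bullet> x = 0 then 2*(1-\<eta>) else 1 - 2*(1/2 - \<eta>)^2) else 1)"

lemma neighbour_factor_measurable[measurable]:
  fixes f g :: "'b \<Rightarrow> 'a::euclidean_space"
  assumes [measurable]: "f \<in> borel_measurable M" "g \<in> borel_measurable M"
  shows "(\<lambda>x. neighbour_factor w r \<eta> (f x) (g x)) \<in> borel_measurable M"
  unfolding neighbour_factor_def by measurable

lemma conditional_failure_bound:
  fixes q :: "(nat \<Rightarrow> 'a::euclidean_space) \<Rightarrow> nat \<Rightarrow> real pmf" and X :: "nat \<Rightarrow> 'a"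
  assumes far: "r \<le> \<bar>w \<bullet> X i\<bar>" and r: "0 < r" and w: "norm w = 1"
    and eta: "0 \<le> \<eta>" "\<eta> < 1/2"
    and q_noise: "\<And>j. j < N \<Longrightarrow> w \<bullet> X j \<noteq> 0 \<Longrightarrow> 1 - \<eta> \<le> pmf (q X j) (target_label w (X j))"
  shows "emeasure (noise_kernel N q X)
          {s \<in> space (state_space N).
             card {j \<in> neighbors N r X i. s j = target_label w (X i)}
               \<le> card {j \<in> neighbors N r X i. s j = - target_label w (X i)}}
        \<le> (\<Prod>j\<in>{..<N} - {i}. ennreal (neighbour_factor w r \<eta> (X i) (X j)))"
proof -
  let ?T = "target_label w (X i)"
  let ?nb = "neighbors N r X i"
  have T: "?T \<noteq> -?T"
    using far r by (auto simp: target_label_def sgn_real_def)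
  have z: "1 \<le> 2*(1-\<eta>)"
    using eta by simp
  have nb: "?nb \<subseteq> {..<N} - {i}"
    by (auto simp: neighbors_def)
  have "emeasure (noise_kernel N q X)
          {s \<in> space (state_space N). card {j \<in> ?nb. s j = ?T} \<le> card {j \<in> ?nb. s j = -?T}}
        \<le> (\<Prod>j\<in>?nb. \<integral>\<^sup>+v. ennreal (tilt (2*(1-\<eta>)) ?T v) \<partial>measure_pmf (q X j))"
  proof -
    have K: "noise_kernel N q X = Pi\<^sub>M {..<N} (\<lambda>j. measure_pmf (q X j))"
      by (simp add: noise_kernel_def)
    moreover have "space (state_space N) = space (Pi\<^sub>M {..<N} (\<lambda>j. measure_pmf (q X j)))"
      by (metis K space_noise_kernel)
    ultimately show ?thesis
      using nb by (simp only:) (intro majority_failure_bound[OF _ _ z T]; auto)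
  qed
  also have "\<dots> \<le> (\<Prod>j\<in>?nb. ennreal (neighbour_factor w r \<eta> (X i) (X j)))"
  proof (rule prod_mono_ennreal)
    fix j assume j: "j \<in> ?nb"
    then have near: "norm (X i - X j) \<le> r" and jN: "j < N"
      by (auto simp: neighbors_def)
    show "(\<integral>\<^sup>+v. ennreal (tilt (2*(1-\<eta>)) ?T v) \<partial>measure_pmf (q X j))
            \<le> ennreal (neighbour_factor w r \<eta> (X i) (X j))"
    proof (cases "w \<bullet> X j = 0")
      case True
      then show ?thesis
        using near tilt_expectation_le[OF z] by (simp add: neighbour_factor_def)
    next
      case False
      then have "target_label w (X j) = ?T"
        using sgn_inner_near[OF w far near] by (simp add: target_label_def)
      then have "1 - \<eta> \<le> pmf (q X j) ?T"
        using q_noise[OF jN False] by simp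
      then show ?thesis
        using near False tilt_expectation_noisy[OF eta] by (simp add: neighbour_factor_def)
    qed
  qed
  also have "\<dots> = (\<Prod>j\<in>{..<N} - {i}. ennreal (neighbour_factor w r \<eta> (X i) (X j)))"
    using nb by (intro prod.mono_neutral_left) (auto simp: neighbors_def neighbour_factor_def)
  finally show ?thesis .
qed

text \<open>Averaging a neighbour factor over the uniform position of the other sensor: it is a
  neighbour off the separator with probability at least (r/2)^d.\<close>

lemma neighbour_factor_integral:
  fixes w y :: "'a::euclidean_space"
  assumes w: "w \<noteq> 0" and y: "norm y \<le> 1" and r: "0 < r" "r \<le> 2"
    and eta: "0 \<le> \<eta>" "\<eta> < 1/2"
  shows "(\<integral>\<^sup>+x. ennreal (neighbour_factor w r \<eta> y x) \<partial>uniform_measure lborel (cball (0::'a) 1))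
           \<le> ennreal (1 - 2 * ((r/2) ^ DIM('a) * (1/2 - \<eta>)^2))"
proof -
  let ?U = "uniform_measure lborel (cball (0::'a) 1)"
  define c where "c = 2*(1/2 - \<eta>)^2"
  interpret U: prob_space ?U by (rule prob_space_unit_ball)
  have "(1/2 - \<eta>)^2 \<le> (1/2)^2"
    using eta by (intro power_mono) auto
  then have c: "0 \<le> c" "c \<le> 1"
    by (simp_all add: c_def power_divide)
  have ind: "integrable ?U (indicator (cball y r) :: 'a \<Rightarrow> real)"
    using U.emeasure_finite[of "cball y r"] by (intro integrable_real_indicator) (simp_all add: less_top)
  have "(\<integral>\<^sup>+x. ennreal (neighbour_factor w r \<eta> y x) \<partial>?U)
          \<le> (\<integral>\<^sup>+x. ennreal (1 - c * indicator (cball y r) x) \<partial>?U)"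
    using AE_uniform_off_hyperplane[OF w]
    by (intro nn_integral_mono_AE, eventually_elim)
       (auto simp: neighbour_factor_def c_def dist_norm indicator_def intro: ennreal_leI)
  also have "\<dots> = ennreal (\<integral>x. 1 - c * indicator (cball y r) x \<partial>?U)"
    using c ind by (intro nn_integral_eq_integral) (simp, auto simp: indicator_def)
  also have "(\<integral>x. 1 - c * indicator (cball y r) x \<partial>?U) = 1 - c * measure ?U (cball y r)"
    using ind U.prob_space by simp
  also have "\<dots> \<le> 1 - c * (r/2) ^ DIM('a)"
    using uniform_ball_prob_ge[OF y r] c by (intro diff_left_mono mult_left_mono) auto
  finally show ?thesis
    by (simp add: c_def ennreal_leI mult.commute mult.left_commute)
qed

lemma rate_bounds:
  fixes r \<eta> :: real
  assumes r: "0 < r" "r \<le> 2" and eta: "0 \<le> \<eta>" "\<eta> < 1/2"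
  shows "0 < (r/2) ^ d * (1/2 - \<eta>)^2" and "(r/2) ^ d * (1/2 - \<eta>)^2 \<le> 1/4"
proof -
  have "(r/2) ^ d \<le> 1"
    using r by (intro power_le_one) auto
  moreover have "(1/2 - \<eta>)^2 \<le> (1/2)^2"
    using eta by (intro power_mono) auto
  ultimately have "(r/2) ^ d * (1/2 - \<eta>)^2 \<le> 1 * (1/2)^2"
    using r by (intro mult_mono) auto
  then show "(r/2) ^ d * (1/2 - \<eta>)^2 \<le> 1/4"
    by (simp add: power2_eq_square)
  show "0 < (r/2) ^ d * (1/2 - \<eta>)^2"
    using r eta by simp
qed

lemma others_average_bound:
  fixes w y :: "'a::euclidean_space"
  assumes J: "finite J" and w: "w \<noteq> 0" and y: "norm y \<le> 1" and r: "0 < r" "r \<le> 2"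
    and eta: "0 \<le> \<eta>" "\<eta> < 1/2"
  shows "(\<integral>\<^sup>+x. (\<Prod>j\<in>J. ennreal (neighbour_factor w r \<eta> y (x j)))
            \<partial>Pi\<^sub>M J (\<lambda>_. uniform_measure lborel (cball (0::'a) 1)))
         \<le> ennreal ((1 - 2 * ((r/2) ^ DIM('a) * (1/2 - \<eta>)^2)) ^ card J)"
proof -
  let ?U = "uniform_measure lborel (cball (0::'a) 1)"
  define B where "B = 1 - 2 * ((r/2) ^ DIM('a) * (1/2 - \<eta>)^2)"
  interpret PS: product_sigma_finite "\<lambda>_. ?U"
    by (intro product_sigma_finite.intro prob_space_imp_sigma_finite prob_space_unit_ball)
  have B: "0 \<le> B"
    using rate_bounds[OF r eta, of "DIM('a)"] by (simp add: B_def)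
  have "(\<integral>\<^sup>+x. (\<Prod>j\<in>J. ennreal (neighbour_factor w r \<eta> y (x j))) \<partial>Pi\<^sub>M J (\<lambda>_. ?U))
          = (\<Prod>j\<in>J. \<integral>\<^sup>+x. ennreal (neighbour_factor w r \<eta> y x) \<partial>?U)"
    using J by (rule PS.product_nn_integral_prod) measurable
  also have "\<dots> \<le> (\<Prod>j\<in>J. ennreal B)"
    using neighbour_factor_integral[OF w y r eta] by (intro prod_mono_ennreal) (simp add: B_def)
  also have "\<dots> = ennreal (B ^ card J)"
    using B by (simp add: ennreal_power)
  finally show ?thesis
    by (simp add: B_def)
qed

lemma position_average_bound:
  fixes w :: "'a::euclidean_space"
  assumes i: "i < N" and w: "w \<noteq> 0" and r: "0 < r" "r \<le> 2" and eta: "0 \<le> \<eta>" "\<eta> < 1/2"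
  shows "(\<integral>\<^sup>+X. (\<Prod>j\<in>{..<N} - {i}. ennreal (neighbour_factor w r \<eta> (X i) (X j)))
            \<partial>(pos_space N :: (nat \<Rightarrow> 'a) measure))
         \<le> ennreal ((1 - 2 * ((r/2) ^ DIM('a) * (1/2 - \<eta>)^2)) ^ (N - 1))"
proof -
  let ?U = "uniform_measure lborel (cball (0::'a) 1)"
  let ?f = "\<lambda>y x. ennreal (neighbour_factor w r \<eta> y x)"
  let ?B = "ennreal ((1 - 2 * ((r/2) ^ DIM('a) * (1/2 - \<eta>)^2)) ^ (N - 1))"
  define J where "J = {..<N} - {i}"
  interpret U: prob_space ?U by (rule prob_space_unit_ball)
  interpret PS: product_sigma_finite "\<lambda>_. ?U"
    by (intro product_sigma_finite.intro U.sigma_finite_measure_axioms)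
  have J: "finite J" "i \<notin> J" "card J = N - 1" "insert i J = {..<N}"
    using i by (auto simp: J_def)
  have "(\<integral>\<^sup>+X. (\<Prod>j\<in>J. ?f (X i) (X j)) \<partial>Pi\<^sub>M (insert i J) (\<lambda>_. ?U))
          = (\<integral>\<^sup>+y. (\<integral>\<^sup>+x. (\<Prod>j\<in>J. ?f ((x(i := y)) i) ((x(i := y)) j)) \<partial>Pi\<^sub>M J (\<lambda>_. ?U)) \<partial>?U)"
  proof (intro PS.product_nn_integral_insert_rev J(1,2))
    have [measurable]: "(\<lambda>X. X j) \<in> borel_measurable (Pi\<^sub>M (insert i J) (\<lambda>_. ?U))"
      if "j \<in> insert i J" for j
      using that by measurable
    show "(\<lambda>X. \<Prod>j\<in>J. ?f (X i) (X j)) \<in> borel_measurable (Pi\<^sub>M (insert i J) (\<lambda>_. ?U))"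
      by measurable
  qed
  also have "\<dots> = (\<integral>\<^sup>+y. (\<integral>\<^sup>+x. (\<Prod>j\<in>J. ?f y (x j)) \<partial>Pi\<^sub>M J (\<lambda>_. ?U)) \<partial>?U)"
    using J(2) by (intro nn_integral_cong arg_cong[where f = "nn_integral _"] ext prod.cong) auto
  also have "\<dots> \<le> (\<integral>\<^sup>+y. ?B \<partial>?U)"
  proof (rule nn_integral_mono_AE)
    have "AE y in ?U. y \<in> cball 0 1"
      by (rule AE_uniform_measureI) auto
    then show "AE y in ?U. (\<integral>\<^sup>+x. (\<Prod>j\<in>J. ?f y (x j)) \<partial>Pi\<^sub>M J (\<lambda>_. ?U)) \<le> ?B"
      by eventually_elim (use others_average_bound[OF J(1) w _ r eta] J(3) in auto)
  qed
  also have "\<dots> = ?B"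
    by (subst nn_integral_const) (simp only: U.emeasure_space_1 mult_1_right)
  finally show ?thesis
    unfolding J(4) by (simp add: pos_space_def J_def)
qed

lemma best_response_majority:
  "best_response N r X s k
     (if card {j \<in> neighbors N r X k. s j = -1} \<le> card {j \<in> neighbors N r X k. s j = 1} then 1 else -1)"
  unfolding best_response_def by auto

lemma sync_update_adversarial:
  assumes T: "T = 1 \<or> T = -1"
    and no_majority: "card {j \<in> neighbors N r X i. s j = T} \<le> card {j \<in> neighbors N r X i. s j = -T}"
  shows "\<exists>s'. sync_update N r X s s' \<and> s' i = -T"
proof
  define s' where "s' k = (if k = i then - T else
      (if card {j \<in> neighbors N r X k. s j = -1} \<le> card {j \<in> neighbors N r X k. s j = 1}
       then 1 else -1))" for k
  have "best_response N r X s k (s' k)" for k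
    using T no_majority best_response_majority[of N r X s k]
    by (cases "k = i") (auto simp: s'_def best_response_def)
  then show "sync_update N r X s s' \<and> s' i = -T"
    by (simp add: sync_update_def s'_def)
qed

text \<open>Deterministic part: every outcome of a synchronous best-response update is correct at all
  sensors at distance \<ge> r from the separator iff at each such sensor the target label has a
  strict majority among its neighbours.  (Without a strict majority, an adversarial tie-break
  or the opposite majority produces a wrong state.)\<close>

lemma sync_update_correct_iff:
  assumes r: "0 < r"
  shows "(\<forall>s'. sync_update N r X s s' \<longrightarrow> (\<forall>i<N. \<bar>w \<bullet> X i\<bar> \<ge> r \<longrightarrow> s' i = target_label w (X i)))
    \<longleftrightarrow> (\<forall>i<N. r \<le> \<bar>w \<bullet> X i\<bar> \<longrightarrow>
          card {j \<in> neighbors N r X i. s j = - target_label w (X i)}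
            < card {j \<in> neighbors N r X i. s j = target_label w (X i)})"
  (is "?correct \<longleftrightarrow> ?majority")
proof -
  have label: "target_label w (X i) = 1 \<or> target_label w (X i) = -1" if "r \<le> \<bar>w \<bullet> X i\<bar>" for i
    using that r by (auto simp: target_label_def sgn_real_def)
  show ?thesis
  proof
    assume correct: ?correct
    show ?majority
    proof (intro allI impI)
      fix i assume i: "i < N" and far: "r \<le> \<bar>w \<bullet> X i\<bar>"
      show "card {j \<in> neighbors N r X i. s j = - target_label w (X i)}
              < card {j \<in> neighbors N r X i. s j = target_label w (X i)}"
      proof (rule ccontr)
        assume "\<not> ?thesis"
        then obtain s' where "sync_update N r X s s'" "s' i = - target_label w (X i)"
          using sync_update_adversarial[OF label[OF far], of N r X i s] by (auto simp: not_less)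
        then show False
          using correct i far label[OF far] by force
      qed
    qed
  next
    assume majority: ?majority
    show ?correct
    proof (intro allI impI)
      fix s' i assume update: "sync_update N r X s s'" and i: "i < N" and far: "r \<le> \<bar>w \<bullet> X i\<bar>"
      then have "best_response N r X s i (s' i)"
        by (simp add: sync_update_def)
      then show "s' i = target_label w (X i)"
        using majority i far label[OF far] unfolding best_response_def by auto
    qed
  qed
qed

definition failure_event :: "nat \<Rightarrow> real \<Rightarrow> 'a::euclidean_space \<Rightarrow> nat \<Rightarrow> ((nat \<Rightarrow> 'a) \<times> (nat \<Rightarrow> real)) set" where
  "failure_event N r w i = {(X, s) \<in> space (pos_space N \<Otimes>\<^sub>M state_space N). r \<le> \<bar>w \<bullet> X i\<bar> \<and>
      card {j \<in> neighbors N r X i. s j = target_label w (X i)}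
        \<le> card {j \<in> neighbors N r X i. s j = - target_label w (X i)}}"

lemma target_label_measurable[measurable]:
  "f \<in> borel_measurable M \<Longrightarrow> (\<lambda>x. target_label w (f x)) \<in> borel_measurable M"
  unfolding target_label_def by measurable

lemma measurable_position[measurable]:
  "j \<in> {..<N} \<Longrightarrow> (\<lambda>p. fst p j) \<in> borel_measurable (pos_space N \<Otimes>\<^sub>M state_space N :: ((nat \<Rightarrow> 'a::euclidean_space) \<times> _) measure)"
  unfolding pos_space_def by measurable

lemma measurable_state[measurable]:
  assumes "j \<in> {..<N}"
  shows "(\<lambda>p. snd p j) \<in> borel_measurable (pos_space N \<Otimes>\<^sub>M state_space N :: ((nat \<Rightarrow> 'a::euclidean_space) \<times> _) measure)"
proof -
  have "(\<lambda>s. s j) \<in> measurable (state_space N) (count_space UNIV)"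
    unfolding state_space_def using measurable_component_singleton[OF assms, of "\<lambda>_. count_space UNIV"] by simp
  then have "(\<lambda>s. s j) \<in> borel_measurable (state_space N)"
    by (rule measurable_compose) simp
  then show ?thesis
    by measurable
qed

text \<open>Counting votes as a sum of indicators makes the failure event measurable.\<close>

lemma card_neighbor_votes:
  "real (card {j \<in> neighbors N r X i. s j = v}) =
     (\<Sum>j<N. of_bool (j \<noteq> i \<and> norm (X i - X j) \<le> r \<and> s j = v))"
proof -
  have "{j \<in> neighbors N r X i. s j = v} = {j \<in> {..<N}. j \<noteq> i \<and> norm (X i - X j) \<le> r \<and> s j = v}"
    by (auto simp: neighbors_def)
  then show ?thesis
    by (simp add: sum.inter_filter[symmetric] of_bool_def)
qed

lemma failure_event_sets:
  assumes i: "i < N"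
  shows "failure_event N r w i \<in> sets (pos_space N \<Otimes>\<^sub>M state_space N :: ((nat \<Rightarrow> 'a::euclidean_space) \<times> _) measure)"
proof -
  let ?P = "pos_space N \<Otimes>\<^sub>M state_space N :: ((nat \<Rightarrow> 'a) \<times> _) measure"
  let ?votes = "\<lambda>c p. \<Sum>j<N. of_bool (j \<noteq> i \<and> norm (fst p i - fst p j) \<le> r \<and>
                                       snd p j = c * target_label w (fst p i)) :: real"
  have i': "i \<in> {..<N}"
    using i by simp
  have vote: "(\<lambda>p. of_bool (j \<noteq> i \<and> norm (fst p i - fst p j) \<le> r \<and>
                           snd p j = c * target_label w (fst p i)) :: real) \<in> borel_measurable ?P"
    if "j \<in> {..<N}" for j c
    using i' that by measurable
  have votes: "?votes c \<in> borel_measurable ?P" for c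
    by (rule borel_measurable_sum) (rule vote)
  have "failure_event N r w i =
          {p \<in> space ?P. r \<le> \<bar>w \<bullet> fst p i\<bar>} \<inter> {p \<in> space ?P. ?votes 1 p \<le> ?votes (-1) p}"
    unfolding failure_event_def card_neighbor_votes[symmetric] mult_1 mult_minus1 of_nat_le_iff
      case_prod_beta prod.collapse
    by blast
  also have "\<dots> \<in> sets ?P"
  proof (rule sets.Int)
    show "{p \<in> space ?P. r \<le> \<bar>w \<bullet> fst p i\<bar>} \<in> sets ?P"
      using i' by measurable
  qed (rule borel_measurable_le[OF votes votes])
  finally show ?thesis .
qed

text \<open>Each failure event has probability at most (1 - 2a)^(N-1), a = (r/2)^d (1/2 - \<eta>)^2:
  disintegrate over the positions, bound the conditional probability by the Chernoff
  product, and average the product over the positions.\<close>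

lemma failure_event_bound:
  fixes w :: "'a::euclidean_space" and q :: "(nat \<Rightarrow> 'a) \<Rightarrow> nat \<Rightarrow> real pmf"
  assumes i: "i < N" and w: "norm w = 1" and r: "0 < r" "r \<le> 2" and eta: "0 \<le> \<eta>" "\<eta> < 1/2"
    and q_noise: "\<And>X j. j < N \<Longrightarrow> w \<bullet> X j \<noteq> 0 \<Longrightarrow> 1 - \<eta> \<le> pmf (q X j) (target_label w (X j))"
    and q_meas: "noise_kernel N q \<in> measurable (pos_space N) (subprob_algebra (state_space N))"
  shows "emeasure (joint_model N q) (failure_event N r w i)
           \<le> ennreal ((1 - 2 * ((r/2) ^ DIM('a) * (1/2 - \<eta>)^2)) ^ (N - 1))"
proof -
  let ?F = "\<lambda>X. \<Prod>j\<in>{..<N} - {i}. ennreal (neighbour_factor w r \<eta> (X i) (X j))"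
  have "emeasure (joint_model N q) (failure_event N r w i) =
    (\<integral>\<^sup>+X. emeasure (noise_kernel N q X)
             {s \<in> space (state_space N). (X, s) \<in> failure_event N r w i} \<partial>pos_space N)"
    by (rule joint_model_emeasure[OF q_meas failure_event_sets[OF i]])
  also have "\<dots> \<le> (\<integral>\<^sup>+X. ?F X \<partial>pos_space N)"
  proof (rule nn_integral_mono)
    fix X :: "nat \<Rightarrow> 'a" assume X: "X \<in> space (pos_space N)"
    show "emeasure (noise_kernel N q X) {s \<in> space (state_space N). (X, s) \<in> failure_event N r w i}
            \<le> ?F X"
    proof (cases "r \<le> \<bar>w \<bullet> X i\<bar>")
      case False
      then show ?thesis
        by (simp add: failure_event_def)
    next
      case True
      then have "{s \<in> space (state_space N). (X, s) \<in> failure_event N r w i} =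
        {s \<in> space (state_space N).
           card {j \<in> neighbors N r X i. s j = target_label w (X i)}
             \<le> card {j \<in> neighbors N r X i. s j = - target_label w (X i)}}"
        using X by (auto simp: failure_event_def space_pair_measure)
      then show ?thesis
        using conditional_failure_bound[where q = q and X = X, OF True r(1) w eta q_noise] by simp
    qed
  qed
  also have "\<dots> \<le> ennreal ((1 - 2 * ((r/2) ^ DIM('a) * (1/2 - \<eta>)^2)) ^ (N - 1))"
    using w by (intro position_average_bound[OF i _ r eta]) auto
  finally show ?thesis .
qed

lemma correct_event_eq:
  assumes r: "0 < r"
  shows "{(X, s) \<in> space (pos_space N \<Otimes>\<^sub>M state_space N).
            \<forall>s'. sync_update N r X s s' \<longrightarrow>
              (\<forall>i<N. \<bar>w \<bullet> X i\<bar> \<ge> r \<longrightarrow> s' i = target_label w (X i))}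
         = space (pos_space N \<Otimes>\<^sub>M state_space N) - (\<Union>i<N. failure_event N r w i)"
  unfolding sync_update_correct_iff[OF r] failure_event_def by (auto simp: not_le)

text \<open>The union bound N (1 - 2a)^(N-1) is at most \<delta> once N \<ge> (2/a) ln(1/(a\<delta>)) + 1:
  use 1 - 2a \<le> e^(-2a), N e^(-a(N-1)) \<le> 1/a and e^(-a(N-1)) \<le> a\<delta>.\<close>

lemma union_bound_small:
  fixes a \<delta> :: real and N :: nat
  assumes a: "0 < a" "a \<le> 1/2" and \<delta>: "0 < \<delta>" "\<delta> < 1"
    and N_large: "2 / a * ln (1 / (a * \<delta>)) + 1 \<le> real N"
  shows "real N * (1 - 2*a) ^ (N - 1) \<le> \<delta>"
proof -
  define L where "L = ln (1 / (a * \<delta>))"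
  have a\<delta>: "0 < a * \<delta>" "a * \<delta> \<le> 1"
    using a \<delta> by (auto intro: mult_le_one)
  then have L: "0 \<le> L"
    by (simp add: L_def)
  moreover have "0 \<le> 2 / a * L"
    using a L by simp
  ultimately have "1 \<le> N"
    using N_large unfolding L_def[symmetric] by linarith
  define n where "n = N - 1"
  have N: "real N = real n + 1"
    using \<open>1 \<le> N\<close> by (simp add: n_def)
  have "2 / a * L \<le> real n"
    using N_large unfolding L_def[symmetric] N by linarith
  then have "2 * L \<le> a * real n"
    using a by (simp add: field_simps)
  have "(1 - 2*a) ^ n \<le> exp (-2*a) ^ n"
    using a by (intro power_mono) (use exp_ge_add_one_self[of "-2*a"] in auto)
  also have "\<dots> = exp (-(a * real n)) * exp (-(a * real n))"
    by (simp flip: exp_of_nat_mult exp_add)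
  finally have decay: "(1 - 2*a) ^ n \<le> exp (-(a * real n)) * exp (-(a * real n))" .
  have "a * real N \<le> 1 + a * real n"
    using N a by (simp add: algebra_simps)
  also have "\<dots> \<le> exp (a * real n)"
    by (rule exp_ge_add_one_self)
  finally have "a * real N \<le> exp (a * real n)" .
  then have first: "real N * exp (-(a * real n)) \<le> 1 / a"
    using a by (simp add: exp_minus field_simps)
  have "exp (-(a * real n)) \<le> exp (-L)"
    using \<open>2 * L \<le> a * real n\<close> L by simp
  also have "exp (-L) = a * \<delta>"
    using a\<delta> a \<delta> by (simp add: L_def ln_div exp_minus)
  finally have second: "exp (-(a * real n)) \<le> a * \<delta>" .
  have "real N * (1 - 2*a) ^ (N - 1) \<le> (real N * exp (-(a * real n))) * exp (-(a * real n))"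
    using decay unfolding n_def[symmetric] by (simp add: mult_left_mono mult.assoc)
  also have "\<dots> \<le> (1 / a) * (a * \<delta>)"
    using first second a by (intro mult_mono) auto
  also have "\<dots> = \<delta>"
    using a by simp
  finally show ?thesis .
qed

theorem theorem2:
  fixes w :: "'a::euclidean_space"
    and N :: nat and r \<eta> \<delta> :: real
    and q :: "(nat \<Rightarrow> 'a) \<Rightarrow> nat \<Rightarrow> real pmf"
  assumes w_unit: "norm w = 1"
    and r: "0 < r" "r \<le> 1"
    and eta: "0 \<le> \<eta>" "\<eta> < 1/2"
    and delta: "0 < \<delta>" "\<delta> < 1"
    and q_vals: "\<And>X i. i < N \<Longrightarrow> set_pmf (q X i) \<subseteq> {1, -1}"
    and q_noise: "\<And>X i. i < N \<Longrightarrow> w \<bullet> X i \<noteq> 0 \<Longrightarrow>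
                    pmf (q X i) (target_label w (X i)) \<ge> 1 - \<eta>"
    and q_meas: "noise_kernel N q \<in> measurable (pos_space N) (subprob_algebra (state_space N))"
    and N_large: "real N \<ge> 2 / ((r/2) ^ DIM('a) * (1/2 - \<eta>)^2)
                     * ln (1 / ((r/2) ^ DIM('a) * (1/2 - \<eta>)^2 * \<delta>)) + 1"
  shows "measure (joint_model N q)
           {(X, s) \<in> space (joint_model N q).
              \<forall>s'. sync_update N r X s s' \<longrightarrow>
                 (\<forall>i<N. \<bar>w \<bullet> X i\<bar> \<ge> r \<longrightarrow> s' i = target_label w (X i))}
         \<ge> 1 - \<delta>"
proof -
  let ?J = "joint_model N q"
  let ?fail = "\<Union>i<N. failure_event N r w i"
  define a where "a = (r/2) ^ DIM('a) * (1/2 - \<eta>)^2"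
  interpret J: prob_space ?J
    by (rule joint_model_sets_prob(2)[OF q_meas])
  have sets: "sets ?J = sets (pos_space N \<Otimes>\<^sub>M state_space N)"
    by (rule joint_model_sets_prob(1)[OF q_meas])
  have a: "0 < a" "a \<le> 1/2"
    using rate_bounds[of r \<eta> "DIM('a)"] r eta by (auto simp: a_def)
  have fail_sets: "failure_event N r w i \<in> sets ?J" if "i < N" for i
    using failure_event_sets[OF that] sets by simp
  have fail_prob: "measure ?J (failure_event N r w i) \<le> (1 - 2*a) ^ (N - 1)" if "i < N" for i
    using failure_event_bound[OF that w_unit r(1) _ eta q_noise q_meas] r a
    by (simp add: a_def J.emeasure_eq_measure ennreal_le_iff)
  have "measure ?J ?fail \<le> (\<Sum>i<N. measure ?J (failure_event N r w i))"
    using fail_sets by (intro J.finite_measure_subadditive_finite) auto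
  also have "\<dots> \<le> real N * (1 - 2*a) ^ (N - 1)"
    using sum_mono[of "{..<N}", OF fail_prob] by simp
  also have "\<dots> \<le> \<delta>"
    using union_bound_small[OF a delta] N_large by (simp add: a_def)
  finally have "measure ?J ?fail \<le> \<delta>" .
  moreover have "space ?J = space (pos_space N \<Otimes>\<^sub>M state_space N)"
    using sets by (rule sets_eq_imp_space_eq)
  moreover have "?fail \<in> sets ?J"
    using fail_sets by auto
  ultimately show ?thesis
    using correct_event_eq[OF r(1), of N w] J.prob_compl[of ?fail] by simp
qed

end
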